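(* Let $a,a^\dagger$ be the annihilation and creation operators of the harmonic oscillator, $[a,a^\dagger]=1$, with vacuum $|0\rangle$ ($a|0\rangle=0$, $\langle0|a^\dagger=0$). For positive integers $n$ let $A_n^\dagger$ act on the formal span of $\{(a^\dagger)^m|0\rangle\}_{m\ge0}$ by $A_n^\dagger(a^\dagger)^m|0\rangle=\frac{m!}{(mn)!}(a^\dagger)^{mn}|0\rangle$, and let $A_n$ act from the right on the formal span of $\{\langle0|a^m\}_{m\ge0}$ by $\langle0|a^mA_n=\langle0|a^{mn}$. Then, with the infinite products over primes understood as formal series, $$\Big(\prod_{p\text{ prime}}\frac{1}{1-A_p^\dagger}\Big)a^\dagger|0\rangle=\sum_{n\ge1}\frac{1}{n!}(a^\dagger)^n|0\rangle,\qquad \prod_{p\text{ prime}}(1-A_p^\dagger)\sum_{n\ge1}\frac{1}{n!}(a^\dagger)^n|0\rangle=a^\dagger|0\rangle,$$ $$\langle0|a\Big(\prod_{p\text{ prime}}\frac{1}{1-A_p}\Big)=\sum_{n\ge1}\langle0|a^n,\qquad \sum_{n\ge1}\langle0|a^n\prod_{p\text{ prime}}(1-A_p)=\langle0|a.$$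
   Context: Since the $A_p^\dagger$ commute, $\frac{1}{1-A_p^\dagger}:=\sum_{k\ge0}(A_p^\dagger)^k$ and infinite products over primes are expanded formally as sums of monomials in the $A_p^\dagger$; applied to the vectors above, each coefficient of $(a^\dagger)^N|0\rangle$ ($N\ge1$) receives only finitely many contributions, and the result is interpreted coefficientwise in the formal space $\mathbb C[[a^\dagger]]|0\rangle$. The same conventions apply to the $A_p$ acting on bras. *)

theory Defs
  imports "HOL-Analysis.Analysis" "HOL-Computational_Algebra.Primes"
begin

text \<open>A ket is a formal series  sum_m c m (a^dagger)^m |0>, represented by its
  coefficient function c.  A bra is a formal series  sum_m b m <0| a^m,
  represented by its coefficient function b.\<close>

type_synonym ket = "nat \<Rightarrow> complex"
type_synonym bra = "nat \<Rightarrow> complex"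

text \<open>A_n^dagger (a^dagger)^m|0> = m!/(mn)! (a^dagger)^(mn)|0>, extended linearly
  (coefficientwise) to formal series.\<close>
definition Adag :: "nat \<Rightarrow> ket \<Rightarrow> ket" where
  "Adag n c = (\<lambda>N. \<Sum>m\<in>{m. m * n = N}. c m * of_real (fact m / fact (m * n)))"

text \<open><0| a^m A_n = <0| a^(mn), extended linearly to formal series (right action).\<close>
definition Abra :: "nat \<Rightarrow> bra \<Rightarrow> bra" where
  "Abra n b = (\<lambda>N. \<Sum>m\<in>{m. m * n = N}. b m)"

text \<open>Exponent vectors of monomials prod_p (A_p)^(k p): finitely supported on primes.\<close>
definition prime_exps :: "(nat \<Rightarrow> nat) set" where
  "prime_exps = {k. finite {p. k p \<noteq> 0} \<and> (\<forall>p. k p \<noteq> 0 \<longrightarrow> prime p)}"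

text \<open>Finite sets of primes (monomials of the expansion of prod_p (1 - A_p)).\<close>
definition prime_sets :: "nat set set" where
  "prime_sets = {S. finite S \<and> (\<forall>p\<in>S. prime p)}"

text \<open>Apply the monomial prod_p (A_p)^(k p) (operators commute; we apply them
  in increasing order of p).\<close>
definition mono_op :: "(nat \<Rightarrow> 'a \<Rightarrow> 'a) \<Rightarrow> (nat \<Rightarrow> nat) \<Rightarrow> 'a \<Rightarrow> 'a" where
  "mono_op A k v = foldr (\<lambda>p. (A p ^^ k p)) (sorted_list_of_set {p. k p \<noteq> 0}) v"

definition set_op :: "(nat \<Rightarrow> 'a \<Rightarrow> 'a) \<Rightarrow> nat set \<Rightarrow> 'a \<Rightarrow> 'a" where
  "set_op A S v = foldr A (sorted_list_of_set S) v"

text \<open>(prod_p 1/(1-A_p)) v, coefficient N equals w N: formal expansion as a sum of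
  monomials, interpreted coefficientwise.\<close>
definition inv_prod_eq :: "(nat \<Rightarrow> (nat \<Rightarrow> complex) \<Rightarrow> (nat \<Rightarrow> complex))
    \<Rightarrow> (nat \<Rightarrow> complex) \<Rightarrow> (nat \<Rightarrow> complex) \<Rightarrow> bool" where
  "inv_prod_eq A v w \<longleftrightarrow> (\<forall>N. ((\<lambda>k. mono_op A k v N) has_sum w N) prime_exps)"

text \<open>(prod_p (1-A_p)) v = w coefficientwise.\<close>
definition prod_eq :: "(nat \<Rightarrow> (nat \<Rightarrow> complex) \<Rightarrow> (nat \<Rightarrow> complex))
    \<Rightarrow> (nat \<Rightarrow> complex) \<Rightarrow> (nat \<Rightarrow> complex) \<Rightarrow> bool" where
  "prod_eq A v w \<longleftrightarrow>
     (\<forall>N. ((\<lambda>S. (-1) ^ card S * set_op A S v N) has_sum w N) prime_sets)"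

definition single1 :: "nat \<Rightarrow> complex" where
  "single1 = (\<lambda>N. if N = 1 then 1 else 0)"

definition exp_ket :: ket where
  "exp_ket = (\<lambda>N. if N \<ge> 1 then 1 / of_nat (fact N) else 0)"

definition geom_bra :: bra where
  "geom_bra = (\<lambda>N. if N \<ge> 1 then 1 else 0)"

end

theory Submission
  imports Defs
begin

text \<open>On a prime \<open>p\<close> both \<open>A\<^sub>p\<^sup>\<dagger>\<close> and \<open>A\<^sub>p\<close> are a dilation \<open>e\<^sub>m \<mapsto> w m / w (p m) e\<^sub>p\<^sub>m\<close>
  of the coefficient index, with weight \<open>w = fact\<close> resp. \<open>w = 1\<close>. Dilations compose
  multiplicatively, so the monomial \<open>\<Prod>\<^sub>p A\<^sub>p\<^sup>k\<^sup>p\<close> is the dilation by \<open>q = \<Prod>\<^sub>p p\<^sup>k\<^sup>p\<close>.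
  By unique factorisation every \<open>q \<ge> 1\<close> occurs exactly once in the expansion of
  \<open>\<Prod>\<^sub>p 1/(1 - A\<^sub>p)\<close>, which therefore spreads \<open>e\<^sub>1\<close> over all \<open>e\<^sub>q\<close> with weight \<open>1 / w q\<close>.
  Conversely, in the expansion of \<open>\<Prod>\<^sub>p (1 - A\<^sub>p)\<close> applied to \<open>\<Sum>\<^sub>n\<^sub>\<ge>\<^sub>1 e\<^sub>n / w n\<close>
  the coefficient of \<open>e\<^sub>N\<close> is \<open>\<Sum>\<^sub>S (-1)\<^sup>|\<^sup>S\<^sup>| / w N\<close> over the sets \<open>S\<close> of prime divisors
  of \<open>N\<close>, which vanishes unless \<open>N = 1\<close> (Moebius cancellation).\<close>

definition dilate :: "(nat \<Rightarrow> complex) \<Rightarrow> nat \<Rightarrow> (nat \<Rightarrow> complex) \<Rightarrow> nat \<Rightarrow> complex" where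
  "dilate w q v = (\<lambda>N. if q dvd N then v (N div q) * w (N div q) / w N else 0)"

definition exps_prod :: "(nat \<Rightarrow> nat) \<Rightarrow> nat" where
  "exps_prod k = (\<Prod>p | k p \<noteq> 0. p ^ k p)"

lemma Collect_mult_eq: "(n::nat) > 0 \<Longrightarrow> {m. m * n = N} = (if n dvd N then {N div n} else {})"
  by auto

lemma Adag_eq_dilate: "n > 0 \<Longrightarrow> Adag n = dilate (\<lambda>N. of_real (fact N)) n"
  unfolding Adag_def dilate_def by (auto simp: Collect_mult_eq fun_eq_iff)

lemma Abra_eq_dilate: "n > 0 \<Longrightarrow> Abra n = dilate (\<lambda>_. 1) n"
  unfolding Abra_def dilate_def by (auto simp: Collect_mult_eq fun_eq_iff)

lemma dilate_1:
  assumes "\<And>N. w N \<noteq> 0"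
  shows "dilate w 1 = id"
  using assms by (auto simp: dilate_def fun_eq_iff)

lemma dilate_dilate:
  assumes "\<And>N. w N \<noteq> 0"
  shows "dilate w a \<circ> dilate w b = dilate w (a * b)"
proof
  fix v
  show "(dilate w a \<circ> dilate w b) v = dilate w (a * b) v"
  proof
    fix N
    have "a dvd N \<and> b dvd N div a \<longleftrightarrow> a * b dvd N"
      by (cases "a = 0") (auto simp: dvd_div_iff_mult mult.commute dest: dvd_mult_left)
    then show "(dilate w a \<circ> dilate w b) v N = dilate w (a * b) v N"
      using assms by (auto simp: dilate_def div_mult2_eq)
  qed
qed

lemma funpow_dilate:
  assumes "\<And>N. w N \<noteq> 0"
  shows "dilate w q ^^ n = dilate w (q ^ n)"
  by (induction n) (simp_all add: dilate_1[OF assms, simplified] dilate_dilate[OF assms])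

lemma foldr_funpow_dilate:
  assumes "\<And>N. w N \<noteq> 0"
  shows "foldr (\<lambda>p. dilate w p ^^ k p) xs = dilate w (\<Prod>p\<leftarrow>xs. p ^ k p)"
  by (induction xs) (simp_all add: dilate_1[OF assms, simplified] dilate_dilate[OF assms] funpow_dilate[OF assms])

lemma mono_op_dilate:
  assumes "k \<in> prime_exps" "\<And>p. prime p \<Longrightarrow> A p = dilate w p" "\<And>N. w N \<noteq> 0"
  shows "mono_op A k = dilate w (exps_prod k)"
proof -
  have fin: "finite {p. k p \<noteq> 0}" and primes: "\<And>p. k p \<noteq> 0 \<Longrightarrow> prime p"
    using assms(1) unfolding prime_exps_def by blast+
  let ?xs = "sorted_list_of_set {p. k p \<noteq> 0}"
  have "foldr (\<lambda>p. A p ^^ k p) ?xs = foldr (\<lambda>p. dilate w p ^^ k p) ?xs"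
    using fin by (intro ext foldr_cong) (auto simp: assms(2) primes)
  also have "\<dots> = dilate w (\<Prod>p\<leftarrow>?xs. p ^ k p)"
    by (rule foldr_funpow_dilate) (rule assms(3))
  also have "(\<Prod>p\<leftarrow>?xs. p ^ k p) = exps_prod k"
    using fin by (simp add: exps_prod_def prod.distinct_set_conv_list[symmetric])
  finally show ?thesis
    by (simp add: mono_op_def fun_eq_iff)
qed

lemma set_op_eq_mono_op: "set_op A S = mono_op A (\<lambda>p. of_bool (p \<in> S))"
proof -
  have "{p. of_bool (p \<in> S) \<noteq> (0::nat)} = S"
    by auto
  then show ?thesis
    unfolding set_op_def mono_op_def
    by (cases "finite S") (auto intro!: foldr_cong)
qed

lemma exps_prod_indicator: "exps_prod (\<lambda>p. of_bool (p \<in> S)) = \<Prod>S"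
  unfolding exps_prod_def by simp

lemma multiplicity_exps_prod:
  assumes "k \<in> prime_exps" "prime p"
  shows "multiplicity p (exps_prod k) = k p"
  using assms unfolding exps_prod_def prime_exps_def
  by (subst multiplicity_prod_prime_powers) auto

lemma indicator_in_prime_exps: "S \<in> prime_sets \<Longrightarrow> (\<lambda>p. of_bool (p \<in> S)) \<in> prime_exps"
  by (auto simp: prime_sets_def prime_exps_def)

lemma exps_prod_pos: "k \<in> prime_exps \<Longrightarrow> exps_prod k > 0"
  unfolding exps_prod_def prime_exps_def by (auto simp: prime_gt_0_nat intro!: prod_pos)

lemma bij_betw_exps_prod: "bij_betw exps_prod prime_exps {0<..}"
proof (rule bij_betw_byWitness)
  let ?exps = "\<lambda>N p. if prime p then multiplicity p N else 0"
  show "\<forall>k\<in>prime_exps. ?exps (exps_prod k) = k"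
    by (auto simp: multiplicity_exps_prod fun_eq_iff prime_exps_def)
  have support: "{p. ?exps N p \<noteq> 0} = prime_factors N" for N :: nat
    by (auto simp: prime_factors_multiplicity)
  have "exps_prod (?exps N) = (\<Prod>p\<in>prime_factors N. p ^ multiplicity p N)" for N
    unfolding exps_prod_def support by (intro prod.cong) auto
  then show "\<forall>N\<in>{0<..}. exps_prod (?exps N) = N"
    by (simp add: prod_prime_factors)
  show "exps_prod ` prime_exps \<subseteq> {0<..}"
    by (auto simp: exps_prod_pos)
  show "?exps ` {0<..} \<subseteq> prime_exps"
    unfolding prime_exps_def using support by (auto split: if_splits)
qed

lemma prod_primes_dvd_iff:
  assumes "S \<in> prime_sets" "N > 0"
  shows "\<Prod>S dvd N \<longleftrightarrow> S \<subseteq> prime_factors N"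
proof
  have S: "finite S" "\<And>p. p \<in> S \<Longrightarrow> prime p"
    using assms(1) unfolding prime_sets_def by auto
  show "S \<subseteq> prime_factors N" if "\<Prod>S dvd N"
    using S that assms(2) by (auto simp: in_prime_factors_iff intro: dvd_trans[OF dvd_prodI[OF S(1)]])
  assume sub: "S \<subseteq> prime_factors N"
  have "\<Prod>S dvd (\<Prod>p\<in>S. p ^ multiplicity p N)"
    using sub by (intro prod_dvd_prod) (auto simp: prime_factors_multiplicity)
  also have "\<dots> dvd (\<Prod>p\<in>prime_factors N. p ^ multiplicity p N)"
    by (intro prod_dvd_prod_subset sub) auto
  also have "\<dots> = N"
    using assms(2) by (simp add: prod_prime_factors)
  finally show "\<Prod>S dvd N" .
qed

lemma sum_Pow_minus_one_power_card:
  "finite P \<Longrightarrow> (\<Sum>S\<in>Pow P. (-1) ^ card S :: 'a :: comm_ring_1) = of_bool (P = {})"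
  using prod_diff_conv_sum[of P "\<lambda>_. 1" "\<lambda>_. 1"] by (auto simp: power_0_left split: if_splits)

lemma dilate_single1:
  assumes "q > 0" "w 1 = 1"
  shows "dilate w q single1 N = (if q = N then 1 / w N else 0)"
  using assms by (auto simp: dilate_def single1_def)

lemma dilate_reciprocals:
  assumes "q > 0" "\<And>N. w N \<noteq> 0"
  shows "dilate w q (\<lambda>N. if N > 0 then 1 / w N else 0) N
           = (if N > 0 \<and> q dvd N then 1 / w N else 0)"
  using assms by (auto simp: dilate_def)

lemma inv_prod_eq_dilate:
  assumes A_dilate: "\<And>p. prime p \<Longrightarrow> A p = dilate w p"
    and w: "\<And>N. w N \<noteq> 0" "w 1 = 1"
  shows "inv_prod_eq A single1 (\<lambda>N. if N > 0 then 1 / w N else 0)"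
  unfolding inv_prod_eq_def
proof
  fix N
  let ?e = "\<lambda>q. if q = N then 1 / w N else 0"
  have "(?e has_sum (if N > 0 then 1 / w N else 0)) {0<..}"
    by (rule has_sum_finite_neutralI[where B = "{0<..} \<inter> {N}"]) auto
  then have sum: "((\<lambda>k. ?e (exps_prod k)) has_sum (if N > 0 then 1 / w N else 0)) prime_exps"
    by (subst has_sum_reindex_bij_betw[OF bij_betw_exps_prod])
  have "mono_op A k single1 N = ?e (exps_prod k)" if "k \<in> prime_exps" for k
  proof -
    have "mono_op A k single1 N = dilate w (exps_prod k) single1 N"
      by (simp only: mono_op_dilate[OF that A_dilate w(1)])
    also have "\<dots> = ?e (exps_prod k)"
      by (rule dilate_single1[where w = w, OF exps_prod_pos[OF that] w(2)])
    finally show ?thesis .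
  qed
  then show "((\<lambda>k. mono_op A k single1 N) has_sum (if N > 0 then 1 / w N else 0)) prime_exps"
    using sum by (rule has_sum_cong[THEN iffD2])
qed

lemma set_op_dilate:
  assumes "S \<in> prime_sets" "\<And>p. prime p \<Longrightarrow> A p = dilate w p" "\<And>N. w N \<noteq> 0"
  shows "set_op A S = dilate w (\<Prod>S)"
  using mono_op_dilate[OF indicator_in_prime_exps[OF assms(1)] assms(2,3)]
  by (simp add: set_op_eq_mono_op exps_prod_indicator)

lemma prod_eq_dilate:
  assumes A_dilate: "\<And>p. prime p \<Longrightarrow> A p = dilate w p"
    and w: "\<And>N. w N \<noteq> 0" "w 1 = 1"
  shows "prod_eq A (\<lambda>N. if N > 0 then 1 / w N else 0) single1"
  unfolding prod_eq_def
proof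
  fix N
  let ?v = "\<lambda>N. if N > 0 then 1 / w N else 0"
  have coeff: "set_op A S ?v N = (if N > 0 \<and> \<Prod>S dvd N then 1 / w N else 0)"
    if "S \<in> prime_sets" for S
  proof -
    have "\<Prod>S > 0"
      using exps_prod_pos[OF indicator_in_prime_exps[OF that]] by (simp add: exps_prod_indicator)
    then have "dilate w (\<Prod>S) ?v N = (if N > 0 \<and> \<Prod>S dvd N then 1 / w N else 0)"
      by (rule dilate_reciprocals) (rule w(1))
    then show ?thesis
      by (simp only: set_op_dilate[OF that A_dilate w(1)])
  qed
  show "((\<lambda>S. (-1) ^ card S * set_op A S ?v N) has_sum single1 N) prime_sets"
  proof (cases "N = 0")
    case True
    then have "single1 N = 0"
      by (simp add: single1_def)
    moreover have "(-1) ^ card S * set_op A S ?v N = 0" if "S \<in> prime_sets" for S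
      using coeff[OF that] True by simp
    ultimately show ?thesis
      by (simp add: has_sum_0)
  next
    case False
    have Pow_sub: "Pow (prime_factors N) \<subseteq> prime_sets"
      by (auto simp: prime_sets_def intro: finite_subset)
    show ?thesis
    proof (rule has_sum_finite_neutralI[OF _ Pow_sub])
      show "(-1) ^ card S * set_op A S ?v N = 0" if "S \<in> prime_sets - Pow (prime_factors N)" for S
        using that False by (simp add: coeff prod_primes_dvd_iff)
      have "(\<Sum>S\<in>Pow (prime_factors N). (-1) ^ card S * set_op A S ?v N)
          = (\<Sum>S\<in>Pow (prime_factors N). (-1) ^ card S) * (1 / w N)"
        unfolding sum_distrib_right using Pow_sub False
        by (intro sum.cong) (auto simp: coeff prod_primes_dvd_iff)
      also have "\<dots> = single1 N"
        using False w(2) by (simp add: sum_Pow_minus_one_power_card prime_factorization_empty_iff single1_def)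
      finally show "single1 N = (\<Sum>S\<in>Pow (prime_factors N). (-1) ^ card S * set_op A S ?v N)" ..
    qed simp
  qed
qed

theorem mainTheorem5:
  shows "inv_prod_eq Adag single1 exp_ket \<and> prod_eq Adag exp_ket single1 \<and>
         inv_prod_eq Abra single1 geom_bra \<and> prod_eq Abra geom_bra single1"
proof -
  have Adag: "\<And>p. prime p \<Longrightarrow> Adag p = dilate (\<lambda>N. of_real (fact N)) p"
    and Abra: "\<And>p. prime p \<Longrightarrow> Abra p = dilate (\<lambda>_. 1) p"
    by (simp_all add: Adag_eq_dilate Abra_eq_dilate prime_gt_0_nat)
  have "exp_ket = (\<lambda>N. if N > 0 then 1 / of_real (fact N) else 0)"
    and "geom_bra = (\<lambda>N. if N > 0 then 1 / 1 else 0)"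
    by (auto simp: exp_ket_def geom_bra_def)
  then show ?thesis
    using inv_prod_eq_dilate[OF Adag] prod_eq_dilate[OF Adag]
      inv_prod_eq_dilate[OF Abra] prod_eq_dilate[OF Abra]
    by simp
qed

end
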